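(* Let $n$ be a natural number, $X=[\underline{x},\overline{x}]$ an interval with rational endpoints and $x \in X$. Then $\arctan(x) \in [\arctan(X)]_n$ and $\exp(x) \in [\exp(X)]_n$; if moreover $\underline{x} \ge 0$ then $\sqrt{x} \in [\sqrt{X}]_n$; and if $\underline{x} > 0$ then $\ln(x) \in [\ln(X)]_n$. Moreover, $\pi \in [\pi]_n$.
   Context: An interval $[a,b]$ with rational endpoints is the set $\{z : a\le z\le b\}$. Bounding functions (all $n\in\mathbb{N}$): Square root ($x\ge0$): $\mathrm{UB}_{\mathrm{sqrt}}(x,0)=x+1$, $\mathrm{UB}_{\mathrm{sqrt}}(x,n+1)=\frac12(y+x/y)$ with $y=\mathrm{UB}_{\mathrm{sqrt}}(x,n)$, $\mathrm{LB}_{\mathrm{sqrt}}(x,n)=x/\mathrm{UB}_{\mathrm{sqrt}}(x,n)$. Arctangent: for $0<x\le1$, $\mathrm{LB}_{\mathrm{atan}}(x,n)=\sum_{i=0}^{2n+1}(-1)^i\frac{x^{2i+1}}{2i+1}$, $\mathrm{UB}_{\mathrm{atan}}(x,n)=\sum_{i=0}^{2n}(-1)^i\frac{x^{2i+1}}{2i+1}$; $\mathrm{LB}_{\pi}(n)=16\,\mathrm{LB}_{\mathrm{atan}}(1/5,n)-4\,\mathrm{UB}_{\mathrm{atan}}(1/239,n)$, $\mathrm{UB}_{\pi}(n)=16\,\mathrm{UB}_{\mathrm{atan}}(1/5,n)-4\,\mathrm{LB}_{\mathrm{atan}}(1/239,n)$; both atan bounds are $0$ at $x=0$; for $x>1$,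 $\mathrm{LB}_{\mathrm{atan}}(x,n)=\mathrm{LB}_\pi(n)/2-\mathrm{UB}_{\mathrm{atan}}(1/x,n)$, $\mathrm{UB}_{\mathrm{atan}}(x,n)=\mathrm{UB}_\pi(n)/2-\mathrm{LB}_{\mathrm{atan}}(1/x,n)$; for $x<0$, $\mathrm{LB}_{\mathrm{atan}}(x,n)=-\mathrm{UB}_{\mathrm{atan}}(-x,n)$, $\mathrm{UB}_{\mathrm{atan}}(x,n)=-\mathrm{LB}_{\mathrm{atan}}(-x,n)$. Exponential: for $-1\le x<0$, $\mathrm{LB}_{\exp}(x,n)=\sum_{i=0}^{2n+3}x^i/i!$, $\mathrm{UB}_{\exp}(x,n)=\sum_{i=0}^{2n+2}x^i/i!$; both equal $1$ at $x=0$; for $x<-1$ with $k=-\lfloor x\rfloor$, $\mathrm{LB}_{\exp}(x,n)=\mathrm{LB}_{\exp}(x/k,n)^k$, $\mathrm{UB}_{\exp}(x,n)=\mathrm{UB}_{\exp}(x/k,n)^k$; for $x>0$, $\mathrm{LB}_{\exp}(x,n)=1/\mathrm{UB}_{\exp}(-x,n)$, $\mathrm{UB}_{\exp}(x,n)=1/\mathrm{LB}_{\exp}(-x,n)$. Logarithm: for $1<x\le2$, $\mathrm{LB}_{\ln}(x,n)=\sum_{i=1}^{2n}(-1)^{i+1}\frac{(x-1)^i}{i}$, $\mathrm{UB}_{\ln}(x,n)=\sum_{i=1}^{2n+1}(-1)^{i+1}\frac{(x-1)^i}{i}$; both are $0$ at $x=1$; for $0<x<1$, $\mathrm{LB}_{\ln}(x,n)=-\mathrm{UB}_{\ln}(1/x,n)$,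 $\mathrm{UB}_{\ln}(x,n)=-\mathrm{LB}_{\ln}(1/x,n)$; for $x>2$, writing $x=2^m y$ with $m\in\mathbb{N}$, $1\le y<2$, $\mathrm{LB}_{\ln}(x,n)=m\,\mathrm{LB}_{\ln}(2,n)+\mathrm{LB}_{\ln}(y,n)$, $\mathrm{UB}_{\ln}(x,n)=m\,\mathrm{UB}_{\ln}(2,n)+\mathrm{UB}_{\ln}(y,n)$. Interval functions: $[\sqrt{X}]_n=[\mathrm{LB}_{\mathrm{sqrt}}(\underline{x},n),\mathrm{UB}_{\mathrm{sqrt}}(\overline{x},n)]$ (when $\underline{x}\ge0$); $[\arctan(X)]_n=[\mathrm{LB}_{\mathrm{atan}}(\underline{x},n),\mathrm{UB}_{\mathrm{atan}}(\overline{x},n)]$; $[\pi]_n=[\mathrm{LB}_\pi(n),\mathrm{UB}_\pi(n)]$; $[\exp(X)]_n=[\mathrm{LB}_{\exp}(\underline{x},n),\mathrm{UB}_{\exp}(\overline{x},n)]$; $[\ln(X)]_n=[\mathrm{LB}_{\ln}(\underline{x},n),\mathrm{UB}_{\ln}(\overline{x},n)]$ (when $\underline{x}>0$). *)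

theory Defs
  imports Complex_Main
begin

fun ub_sqrt :: "rat \<Rightarrow> nat \<Rightarrow> rat" where
  "ub_sqrt x 0 = x + 1"
| "ub_sqrt x (Suc n) = (let y = ub_sqrt x n in (y + x / y) / 2)"

definition lb_sqrt :: "rat \<Rightarrow> nat \<Rightarrow> rat" where
  "lb_sqrt x n = x / ub_sqrt x n"

text \<open>Taylor partial sums, used for 0 \<le> x \<le> 1 (both are 0 at x = 0).\<close>
definition lb_atan_base :: "rat \<Rightarrow> nat \<Rightarrow> rat" where
  "lb_atan_base x n = (\<Sum>i\<le>2*n+1. (-1)^i * x^(2*i+1) / of_nat (2*i+1))"

definition ub_atan_base :: "rat \<Rightarrow> nat \<Rightarrow> rat" where
  "ub_atan_base x n = (\<Sum>i\<le>2*n. (-1)^i * x^(2*i+1) / of_nat (2*i+1))"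

definition lb_pi :: "nat \<Rightarrow> rat" where
  "lb_pi n = 16 * lb_atan_base (1/5) n - 4 * ub_atan_base (1/239) n"

definition ub_pi :: "nat \<Rightarrow> rat" where
  "ub_pi n = 16 * ub_atan_base (1/5) n - 4 * lb_atan_base (1/239) n"

definition lb_atan_nonneg :: "rat \<Rightarrow> nat \<Rightarrow> rat" where
  "lb_atan_nonneg x n =
     (if x \<le> 1 then lb_atan_base x n else lb_pi n / 2 - ub_atan_base (1/x) n)"

definition ub_atan_nonneg :: "rat \<Rightarrow> nat \<Rightarrow> rat" where
  "ub_atan_nonneg x n =
     (if x \<le> 1 then ub_atan_base x n else ub_pi n / 2 - lb_atan_base (1/x) n)"

definition lb_atan :: "rat \<Rightarrow> nat \<Rightarrow> rat" where
  "lb_atan x n = (if x < 0 then - ub_atan_nonneg (-x) n else lb_atan_nonneg x n)"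

definition ub_atan :: "rat \<Rightarrow> nat \<Rightarrow> rat" where
  "ub_atan x n = (if x < 0 then - lb_atan_nonneg (-x) n else ub_atan_nonneg x n)"

text \<open>Taylor partial sums, used for -1 \<le> x \<le> 0 (both are 1 at x = 0).\<close>
definition lb_exp_base :: "rat \<Rightarrow> nat \<Rightarrow> rat" where
  "lb_exp_base x n = (\<Sum>i\<le>2*n+3. x^i / fact i)"

definition ub_exp_base :: "rat \<Rightarrow> nat \<Rightarrow> rat" where
  "ub_exp_base x n = (\<Sum>i\<le>2*n+2. x^i / fact i)"

definition lb_exp_nonpos :: "rat \<Rightarrow> nat \<Rightarrow> rat" where
  "lb_exp_nonpos x n =
     (if -1 \<le> x then lb_exp_base x n
      else (let k = nat (- \<lfloor>x\<rfloor>) in lb_exp_base (x / of_nat k) n ^ k))"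

definition ub_exp_nonpos :: "rat \<Rightarrow> nat \<Rightarrow> rat" where
  "ub_exp_nonpos x n =
     (if -1 \<le> x then ub_exp_base x n
      else (let k = nat (- \<lfloor>x\<rfloor>) in ub_exp_base (x / of_nat k) n ^ k))"

definition lb_exp :: "rat \<Rightarrow> nat \<Rightarrow> rat" where
  "lb_exp x n = (if x \<le> 0 then lb_exp_nonpos x n else 1 / ub_exp_nonpos (-x) n)"

definition ub_exp :: "rat \<Rightarrow> nat \<Rightarrow> rat" where
  "ub_exp x n = (if x \<le> 0 then ub_exp_nonpos x n else 1 / lb_exp_nonpos (-x) n)"

text \<open>Taylor partial sums, used for 1 \<le> x \<le> 2 (both are 0 at x = 1).\<close>
definition lb_ln_base :: "rat \<Rightarrow> nat \<Rightarrow> rat" where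
  "lb_ln_base x n = (\<Sum>i=1..2*n. (-1)^(i+1) * (x-1)^i / of_nat i)"

definition ub_ln_base :: "rat \<Rightarrow> nat \<Rightarrow> rat" where
  "ub_ln_base x n = (\<Sum>i=1..2*n+1. (-1)^(i+1) * (x-1)^i / of_nat i)"

text \<open>For x > 2: the unique m with 2^m \<le> x < 2^(m+1), so that x = 2^m y with 1 \<le> y < 2.\<close>
definition ln_exponent :: "rat \<Rightarrow> nat" where
  "ln_exponent x = (THE m. 2^m \<le> x \<and> x < 2^(m+1))"

definition lb_ln_ge1 :: "rat \<Rightarrow> nat \<Rightarrow> rat" where
  "lb_ln_ge1 x n =
     (if x \<le> 2 then lb_ln_base x n
      else (let m = ln_exponent x; y = x / 2^m in
            of_nat m * lb_ln_base 2 n + lb_ln_base y n))"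

definition ub_ln_ge1 :: "rat \<Rightarrow> nat \<Rightarrow> rat" where
  "ub_ln_ge1 x n =
     (if x \<le> 2 then ub_ln_base x n
      else (let m = ln_exponent x; y = x / 2^m in
            of_nat m * ub_ln_base 2 n + ub_ln_base y n))"

definition lb_ln :: "rat \<Rightarrow> nat \<Rightarrow> rat" where
  "lb_ln x n = (if x < 1 then - ub_ln_ge1 (1/x) n else lb_ln_ge1 x n)"

definition ub_ln :: "rat \<Rightarrow> nat \<Rightarrow> rat" where
  "ub_ln x n = (if x < 1 then - lb_ln_ge1 (1/x) n else ub_ln_ge1 x n)"

definition interval_set :: "rat \<times> rat \<Rightarrow> real set" where
  "interval_set X = {real_of_rat (fst X) .. real_of_rat (snd X)}"

definition sqrt_interval :: "rat \<times> rat \<Rightarrow> nat \<Rightarrow> rat \<times> rat" where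
  "sqrt_interval X n = (lb_sqrt (fst X) n, ub_sqrt (snd X) n)"

definition atan_interval :: "rat \<times> rat \<Rightarrow> nat \<Rightarrow> rat \<times> rat" where
  "atan_interval X n = (lb_atan (fst X) n, ub_atan (snd X) n)"

definition pi_interval :: "nat \<Rightarrow> rat \<times> rat" where
  "pi_interval n = (lb_pi n, ub_pi n)"

definition exp_interval :: "rat \<times> rat \<Rightarrow> nat \<Rightarrow> rat \<times> rat" where
  "exp_interval X n = (lb_exp (fst X) n, ub_exp (snd X) n)"

definition ln_interval :: "rat \<times> rat \<Rightarrow> nat \<Rightarrow> rat \<times> rat" where
  "ln_interval X n = (lb_ln (fst X) n, ub_ln (snd X) n)"

end

theory Submission
  imports Defs "HOL-Analysis.Harmonic_Numbers"
begin

text \<open>Each truncated Taylor polynomial in the definitions is a partial sum of an alternating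
series with nonincreasing terms (arctan on [0,1], exp on [-1,0], ln (1+t) on [0,1]), so by the
Leibniz criterion an even number of terms gives a lower and an odd number an upper bound.
Other arguments are reduced to these ranges by arctan x = pi/2 - arctan (1/x) with Machin's
formula for pi, exp x = exp (x/k)^k, exp x = 1 / exp (-x), ln (2^m y) = m ln 2 + ln y and
ln x = - ln (1/x); each reduction maps lower bounds to lower and upper bounds to upper ones.
The reciprocal step needs a positive lower bound for exp, which the four-term partial sum
already provides. The Newton iterates for the square root stay above it by AM-GM. Finally all
five functions are monotone, so bounds at the endpoints of X enclose the value on all of X.\<close>

lemma alternating_series_bounds:
  fixes a :: "nat \<Rightarrow> real"
  assumes sums: "(\<lambda>i. (-1)^i * a i) sums v"
    and nonneg: "\<And>i. 0 \<le> a i" and antitone: "\<And>i. a (Suc i) \<le> a i"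
  shows "(\<Sum>i<2*m. (-1)^i * a i) \<le> v" "v \<le> (\<Sum>i<2*m+1. (-1)^i * a i)"
proof -
  have "(\<lambda>i. \<bar>(-1)^i * a i\<bar>) \<longlonglongrightarrow> 0"
    using summable_LIMSEQ_zero[OF sums_summable[OF sums]] by (rule tendsto_rabs_zero)
  then have "a \<longlonglongrightarrow> 0" using nonneg by (simp add: abs_mult)
  moreover have "v = (\<Sum>i. (-1)^i * a i)" using sums by (simp add: sums_iff)
  ultimately show "(\<Sum>i<2*m. (-1)^i * a i) \<le> v" "v \<le> (\<Sum>i<2*m+1. (-1)^i * a i)"
    using summable_Leibniz'(2,4)[of a] nonneg antitone by auto
qed

lemma alternating_even_partial_sums_mono:
  fixes a :: "nat \<Rightarrow> real"
  assumes antitone: "\<And>i. a (Suc i) \<le> a i" and "m \<le> m'"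
  shows "(\<Sum>i<2*m. (-1)^i * a i) \<le> (\<Sum>i<2*m'. (-1)^i * a i)"
  using \<open>m \<le> m'\<close>
proof (induction m' rule: dec_induct)
  case (step k)
  have "2 * Suc k = Suc (Suc (2*k))" by simp
  then have "(\<Sum>i<2*Suc k. (-1)^i * a i) = (\<Sum>i<2*k. (-1)^i * a i) + (a (2*k) - a (Suc (2*k)))"
    by simp
  then show ?case using step antitone[of "2*k"] by linarith
qed simp

lemma arctan_taylor_bounds:
  fixes x :: real
  assumes "0 \<le> x" "x \<le> 1"
  shows "(\<Sum>i<2*m. (-1)^i * (x^(2*i+1) / real (2*i+1))) \<le> arctan x"
    "arctan x \<le> (\<Sum>i<2*m+1. (-1)^i * (x^(2*i+1) / real (2*i+1)))"
proof -
  have series_term: "\<And>i. 1 / real (i*2+1) * x^(i*2+1) = x^(2*i+1) / real (2*i+1)"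
    by (simp add: mult.commute)
  have x: "\<bar>x\<bar> \<le> 1" using assms by simp
  have "summable (\<lambda>i. (-1)^i * (x^(2*i+1) / real (2*i+1)))"
    using summable_arctan_series[OF x] by (simp only: series_term)
  moreover have "arctan x = (\<Sum>i. (-1)^i * (x^(2*i+1) / real (2*i+1)))"
    using arctan_series[OF x] by (simp only: series_term)
  ultimately have sums: "(\<lambda>i. (-1)^i * (x^(2*i+1) / real (2*i+1))) sums arctan x"
    by (simp add: summable_sums)
  have nonneg: "0 \<le> x^(2*i+1) / real (2*i+1)" for i
    using assms by simp
  have antitone: "x^(2*Suc i+1) / real (2*Suc i+1) \<le> x^(2*i+1) / real (2*i+1)" for i
    using assms by (intro frac_le power_decreasing) auto
  from alternating_series_bounds[OF sums nonneg antitone]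
  show "(\<Sum>i<2*m. (-1)^i * (x^(2*i+1) / real (2*i+1))) \<le> arctan x"
    "arctan x \<le> (\<Sum>i<2*m+1. (-1)^i * (x^(2*i+1) / real (2*i+1)))" .
qed

lemma ln_one_plus_sums:
  fixes t :: real
  assumes "0 \<le> t" "t \<le> 1"
  shows "(\<lambda>i. (-1)^i * (t^Suc i / real (Suc i))) sums ln (1 + t)"
proof (cases "t = 1")
  case True
  then show ?thesis using alternating_harmonic_series_sums by simp
next
  case False
  then have "(\<lambda>i. - ((-t)^i) / real i) sums ln (1 + t)"
    using assms by (intro ln_series') auto
  then have "(\<lambda>i. - ((-t)^Suc i) / real (Suc i)) sums ln (1 + t)"
    using sums_Suc_iff[of "\<lambda>i. - ((-t)^i) / real i"] by simp
  then show ?thesis by (simp add: power_minus[of t] algebra_simps)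
qed

lemma ln_taylor_bounds:
  fixes x :: real
  assumes "1 \<le> x" "x \<le> 2"
  shows "(\<Sum>i<2*m. (-1)^i * ((x-1)^Suc i / real (Suc i))) \<le> ln x"
    "ln x \<le> (\<Sum>i<2*m+1. (-1)^i * ((x-1)^Suc i / real (Suc i)))"
proof -
  have sums: "(\<lambda>i. (-1)^i * ((x-1)^Suc i / real (Suc i))) sums ln x"
    using ln_one_plus_sums[of "x-1"] assms by simp
  have nonneg: "0 \<le> (x-1)^Suc i / real (Suc i)" for i
    using assms by simp
  have antitone: "(x-1)^Suc (Suc i) / real (Suc (Suc i)) \<le> (x-1)^Suc i / real (Suc i)" for i
    using assms by (intro frac_le power_decreasing) auto
  from alternating_series_bounds[OF sums nonneg antitone]
  show "(\<Sum>i<2*m. (-1)^i * ((x-1)^Suc i / real (Suc i))) \<le> ln x"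
    "ln x \<le> (\<Sum>i<2*m+1. (-1)^i * ((x-1)^Suc i / real (Suc i)))" .
qed

lemma exp_taylor_bounds:
  fixes x :: real
  assumes "-1 \<le> x" "x \<le> 0"
  shows "(\<Sum>i<2*m. x^i / fact i) \<le> exp x" "exp x \<le> (\<Sum>i<2*m+1. x^i / fact i)"
    and exp_taylor_even_pos: "2 \<le> m \<Longrightarrow> 0 < (\<Sum>i<2*m. x^i / fact i)"
proof -
  define t where "t = -x"
  have t: "0 \<le> t" "t \<le> 1" using assms by (auto simp: t_def)
  have alternating: "x^i / fact i = (-1)^i * (t^i / fact i)" for i
    by (simp add: t_def power_minus[symmetric])
  have "(\<lambda>i. x^i / fact i) sums exp x"
    using exp_converges[of x] by (simp add: divide_inverse mult.commute)
  then have sums: "(\<lambda>i. (-1)^i * (t^i / fact i)) sums exp x"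
    by (simp only: alternating)
  have nonneg: "0 \<le> t^i / fact i" for i
    using t by simp
  have antitone: "t^Suc i / fact (Suc i) \<le> t^i / fact i" for i
  proof -
    have "t^Suc i / fact (Suc i) = (t / real (Suc i)) * (t^i / fact i)" by (simp add: field_simps)
    moreover have "t / real (Suc i) \<le> 1" using t by (simp add: divide_le_eq)
    moreover have "0 \<le> t / real (Suc i)" using t by simp
    ultimately show ?thesis using nonneg[of i] by (metis mult_left_le_one_le)
  qed
  from alternating_series_bounds[OF sums nonneg antitone]
  show "(\<Sum>i<2*m. x^i / fact i) \<le> exp x" "exp x \<le> (\<Sum>i<2*m+1. x^i / fact i)"
    by (simp_all only: alternating)
  assume "2 \<le> m"
  have "1 - t + t^2/2 - t^3/6 = (\<Sum>i<2*2. (-1)^i * (t^i / fact i))"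
    by (simp add: numeral_eq_Suc fact_numeral)
  also have "\<dots> \<le> (\<Sum>i<2*m. (-1)^i * (t^i / fact i))"
    using \<open>2 \<le> m\<close> by (intro alternating_even_partial_sums_mono antitone)
  finally have "1 - t + t^2/2 - t^3/6 \<le> (\<Sum>i<2*m. x^i / fact i)" by (simp only: alternating)
  moreover have "0 < 1 - t + t^2/2 - t^3/6"
  proof -
    have "t^3 \<le> t^2" using t by (intro power_decreasing) auto
    moreover have "0 \<le> (t - 3/2)^2" by simp
    ultimately show ?thesis by (simp add: power2_eq_square power2_diff algebra_simps)
  qed
  ultimately show "0 < (\<Sum>i<2*m. x^i / fact i)" by linarith
qed

lemma sqrt_le_newton_step:
  fixes x y :: real
  assumes "0 \<le> x" "0 < y"
  shows "sqrt x \<le> (y + x / y) / 2"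
  using arith_geo_mean_sqrt[of y "x / y"] assms by simp

lemma ub_sqrt_pos: "0 \<le> q \<Longrightarrow> 0 < ub_sqrt q n"
  by (induction n) (simp_all add: Let_def add_pos_nonneg)

lemma sqrt_le_ub_sqrt:
  assumes "0 \<le> q"
  shows "sqrt (of_rat q) \<le> real_of_rat (ub_sqrt q n)"
proof (induction n)
  case 0
  have "sqrt (of_rat q) \<le> (of_rat q + 1) / 2"
    using sqrt_le_newton_step[of "of_rat q" 1] assms by simp
  also have "\<dots> \<le> real_of_rat (ub_sqrt q 0)" using assms by (simp add: of_rat_add)
  finally show ?case .
next
  case (Suc n)
  have "0 < real_of_rat (ub_sqrt q n)" using ub_sqrt_pos[OF assms] by simp
  then have "sqrt (of_rat q) \<le> (of_rat (ub_sqrt q n) + of_rat q / of_rat (ub_sqrt q n)) / 2"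
    using sqrt_le_newton_step assms by simp
  then show ?case by (simp add: Let_def of_rat_add of_rat_divide)
qed

lemma lb_sqrt_le_sqrt:
  assumes "0 \<le> q"
  shows "real_of_rat (lb_sqrt q n) \<le> sqrt (of_rat q)"
proof -
  define s where "s = sqrt (real_of_rat q)"
  define y where "y = real_of_rat (ub_sqrt q n)"
  have "0 < y" "s \<le> y" "0 \<le> s"
    using ub_sqrt_pos[OF assms] sqrt_le_ub_sqrt[OF assms] assms by (auto simp: y_def s_def)
  have "real_of_rat (lb_sqrt q n) = s * s / y"
    using assms by (simp add: lb_sqrt_def of_rat_divide s_def y_def)
  also have "\<dots> \<le> s * y / y"
    using \<open>0 < y\<close> \<open>s \<le> y\<close> \<open>0 \<le> s\<close> by (intro divide_right_mono mult_left_mono) auto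
  also have "\<dots> = s" using \<open>0 < y\<close> by simp
  finally show ?thesis by (simp add: s_def)
qed

lemma of_rat_fact: "real_of_rat (fact n) = fact n"
  by (metis of_nat_fact of_rat_of_nat_eq)

lemma of_rat_lb_atan_base:
  "real_of_rat (lb_atan_base q n) = (\<Sum>i<2*(n+1). (-1)^i * (of_rat q^(2*i+1) / real (2*i+1)))"
proof -
  have ivl: "{..2*n+1} = {..<2*(n+1)}" by auto
  show ?thesis
    unfolding lb_atan_base_def of_rat_sum ivl
    by (rule sum.cong[OF refl])
      (simp only: of_rat_mult of_rat_divide of_rat_power of_rat_minus of_rat_1 of_rat_of_nat_eq
        times_divide_eq_right)
qed

lemma of_rat_ub_atan_base:
  "real_of_rat (ub_atan_base q n) = (\<Sum>i<2*n+1. (-1)^i * (of_rat q^(2*i+1) / real (2*i+1)))"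
proof -
  have ivl: "{..2*n} = {..<2*n+1}" by auto
  show ?thesis
    unfolding ub_atan_base_def of_rat_sum ivl
    by (rule sum.cong[OF refl])
      (simp only: of_rat_mult of_rat_divide of_rat_power of_rat_minus of_rat_1 of_rat_of_nat_eq
        times_divide_eq_right)
qed

lemma of_rat_lb_exp_base:
  "real_of_rat (lb_exp_base q n) = (\<Sum>i<2*(n+2). of_rat q^i / fact i)"
proof -
  have ivl: "{..2*n+3} = {..<2*(n+2)}" by auto
  show ?thesis
    unfolding lb_exp_base_def of_rat_sum ivl
    by (rule sum.cong[OF refl]) (simp only: of_rat_divide of_rat_power of_rat_fact)
qed

lemma of_rat_ub_exp_base:
  "real_of_rat (ub_exp_base q n) = (\<Sum>i<2*(n+1)+1. of_rat q^i / fact i)"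
proof -
  have ivl: "{..2*n+2} = {..<2*(n+1)+1}" by auto
  show ?thesis
    unfolding ub_exp_base_def of_rat_sum ivl
    by (rule sum.cong[OF refl]) (simp only: of_rat_divide of_rat_power of_rat_fact)
qed

lemma of_rat_ln_base_sum:
  "real_of_rat (\<Sum>i=1..K. (-1)^(i+1) * (q-1)^i / of_nat i)
     = (\<Sum>i<K. (-1)^i * ((of_rat q - 1)^Suc i / real (Suc i)))"
  unfolding of_rat_sum One_nat_def sum.atLeast1_atMost_eq
  by (rule sum.cong[OF refl])
    (simp add: of_rat_mult of_rat_divide of_rat_power of_rat_diff of_rat_add)

lemma atan_base_bounds:
  assumes "0 \<le> q" "q \<le> 1"
  shows "real_of_rat (lb_atan_base q n) \<le> arctan (of_rat q)
    \<and> arctan (of_rat q) \<le> real_of_rat (ub_atan_base q n)"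
proof -
  have "0 \<le> real_of_rat q" "real_of_rat q \<le> 1" using assms by simp_all
  from arctan_taylor_bounds[OF this, of "n+1"] arctan_taylor_bounds[OF this, of n]
  show ?thesis unfolding of_rat_lb_atan_base of_rat_ub_atan_base by blast
qed

lemma pi_bounds: "real_of_rat (lb_pi n) \<le> pi \<and> pi \<le> real_of_rat (ub_pi n)"
proof -
  have "real_of_rat (lb_atan_base (1/5) n) \<le> arctan (1/5)
      \<and> arctan (1/5) \<le> real_of_rat (ub_atan_base (1/5) n)"
    using atan_base_bounds[of "1/5" n] by (simp add: of_rat_divide)
  moreover have "real_of_rat (lb_atan_base (1/239) n) \<le> arctan (1/239)
      \<and> arctan (1/239) \<le> real_of_rat (ub_atan_base (1/239) n)"
    using atan_base_bounds[of "1/239" n] by (simp add: of_rat_divide)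
  ultimately show ?thesis
    using machin by (simp add: lb_pi_def ub_pi_def of_rat_diff of_rat_mult)
qed

lemma atan_nonneg_bounds:
  assumes "0 \<le> q"
  shows "real_of_rat (lb_atan_nonneg q n) \<le> arctan (of_rat q)
    \<and> arctan (of_rat q) \<le> real_of_rat (ub_atan_nonneg q n)"
proof (cases "q \<le> 1")
  case True
  then show ?thesis
    using atan_base_bounds[OF assms True] by (simp add: lb_atan_nonneg_def ub_atan_nonneg_def)
next
  case False
  then have "0 \<le> 1/q" "1/q \<le> 1" by simp_all
  from atan_base_bounds[OF this, of n]
  have "real_of_rat (lb_atan_base (1/q) n) \<le> pi/2 - arctan (of_rat q)
      \<and> pi/2 - arctan (of_rat q) \<le> real_of_rat (ub_atan_base (1/q) n)"
    using arctan_inverse[of "of_rat q"] False by (simp add: of_rat_divide inverse_eq_divide)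
  then show ?thesis
    using False pi_bounds[of n]
    by (simp add: lb_atan_nonneg_def ub_atan_nonneg_def of_rat_diff of_rat_divide)
qed

lemma atan_bounds:
  "real_of_rat (lb_atan q n) \<le> arctan (of_rat q) \<and> arctan (of_rat q) \<le> real_of_rat (ub_atan q n)"
  using atan_nonneg_bounds[of "-q" n] atan_nonneg_bounds[of q n]
  by (auto simp: lb_atan_def ub_atan_def of_rat_minus arctan_minus)

lemma exp_base_bounds:
  assumes "-1 \<le> q" "q \<le> 0"
  shows "real_of_rat (lb_exp_base q n) \<le> exp (of_rat q)
    \<and> exp (of_rat q) \<le> real_of_rat (ub_exp_base q n) \<and> 0 < real_of_rat (lb_exp_base q n)"
proof -
  have "-1 \<le> real_of_rat q" "real_of_rat q \<le> 0"
    using assms of_rat_less_eq[of "-1" q] by simp_all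
  from exp_taylor_bounds[OF this, of "n+2"] exp_taylor_bounds[OF this, of "n+1"]
    exp_taylor_even_pos[OF this, of "n+2"]
  show ?thesis unfolding of_rat_lb_exp_base of_rat_ub_exp_base by simp
qed

lemma neg_floor_scaling:
  fixes q :: rat
  assumes "q < 0"
  shows "0 < nat (-\<lfloor>q\<rfloor>)" "-1 \<le> q / of_nat (nat (-\<lfloor>q\<rfloor>))"
proof -
  have "\<lfloor>q\<rfloor> < 0" using assms by simp
  then have k: "of_nat (nat (-\<lfloor>q\<rfloor>)) = - (of_int \<lfloor>q\<rfloor> :: rat)" by simp
  show "0 < nat (-\<lfloor>q\<rfloor>)" using \<open>\<lfloor>q\<rfloor> < 0\<close> by simp
  have "- of_nat (nat (-\<lfloor>q\<rfloor>)) \<le> q" unfolding k by simp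
  then show "-1 \<le> q / of_nat (nat (-\<lfloor>q\<rfloor>))"
    using \<open>0 < nat (-\<lfloor>q\<rfloor>)\<close> by (simp add: le_divide_eq)
qed

lemma exp_nonpos_bounds:
  assumes "q \<le> 0"
  shows "real_of_rat (lb_exp_nonpos q n) \<le> exp (of_rat q)
    \<and> exp (of_rat q) \<le> real_of_rat (ub_exp_nonpos q n) \<and> 0 < real_of_rat (lb_exp_nonpos q n)"
proof (cases "-1 \<le> q")
  case True
  then show ?thesis
    using exp_base_bounds[OF True assms] by (simp add: lb_exp_nonpos_def ub_exp_nonpos_def)
next
  case False
  define k where "k = nat (-\<lfloor>q\<rfloor>)"
  have k: "0 < k" "-1 \<le> q / of_nat k"
    using neg_floor_scaling[of q] False unfolding k_def by simp_all
  have "q / of_nat k \<le> 0" using assms k(1) by (simp add: divide_nonpos_pos)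
  define l where "l = real_of_rat (lb_exp_base (q / of_nat k) n)"
  define u where "u = real_of_rat (ub_exp_base (q / of_nat k) n)"
  have "l \<le> exp (of_rat q / k)" "exp (of_rat q / k) \<le> u" "0 < l"
    using exp_base_bounds[OF k(2) \<open>q / of_nat k \<le> 0\<close>, of n]
    by (simp_all add: l_def u_def of_rat_divide)
  moreover have "exp (of_rat q) = exp (of_rat q / k) ^ k"
    using k(1) by (simp flip: exp_of_nat_mult)
  ultimately have "l ^ k \<le> exp (of_rat q)" "exp (of_rat q) \<le> u ^ k" "0 < l ^ k"
    by (simp_all add: power_mono)
  then show ?thesis
    using False
    by (simp add: lb_exp_nonpos_def ub_exp_nonpos_def Let_def k_def[symmetric] of_rat_power
        l_def u_def)
qed

lemma exp_bounds:
  "real_of_rat (lb_exp q n) \<le> exp (of_rat q) \<and> exp (of_rat q) \<le> real_of_rat (ub_exp q n)"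
proof (cases "q \<le> 0")
  case True
  then show ?thesis using exp_nonpos_bounds[OF True, of n] by (simp add: lb_exp_def ub_exp_def)
next
  case False
  define l where "l = real_of_rat (lb_exp_nonpos (-q) n)"
  define u where "u = real_of_rat (ub_exp_nonpos (-q) n)"
  have "l \<le> exp (- of_rat q)" "exp (- of_rat q) \<le> u" "0 < l"
    using exp_nonpos_bounds[of "-q" n] False by (simp_all add: l_def u_def of_rat_minus)
  then have "1 / u \<le> 1 / exp (- of_rat q)" "1 / exp (- of_rat q) \<le> 1 / l"
    by (auto intro!: frac_le)
  then have "1 / u \<le> exp (of_rat q)" "exp (of_rat q) \<le> 1 / l"
    by (simp_all add: exp_minus inverse_eq_divide)
  then show ?thesis
    using False by (simp add: lb_exp_def ub_exp_def of_rat_divide l_def u_def)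
qed

lemma ln_base_bounds:
  assumes "1 \<le> q" "q \<le> 2"
  shows "real_of_rat (lb_ln_base q n) \<le> ln (of_rat q) \<and> ln (of_rat q) \<le> real_of_rat (ub_ln_base q n)"
proof -
  have "1 \<le> real_of_rat q" "real_of_rat q \<le> 2"
    using assms of_rat_less_eq[of 1 q] of_rat_less_eq[of q 2] by auto
  from ln_taylor_bounds[OF this, of n]
  show ?thesis unfolding lb_ln_base_def ub_ln_base_def of_rat_ln_base_sum by blast
qed

lemma ln_exponent_bounds:
  assumes "2 < q"
  shows "2 ^ ln_exponent q \<le> q \<and> q < 2 ^ (ln_exponent q + 1)"
proof -
  have "2 \<le> \<lfloor>q\<rfloor>" using assms by (simp add: le_floor_iff)
  then have "1 \<le> nat \<lfloor>q\<rfloor>" by linarith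
  then obtain m where "2^m \<le> nat \<lfloor>q\<rfloor>" "nat \<lfloor>q\<rfloor> < 2^(m+1)"
    using ex_power_ivl1[of 2] by blast
  then have "2^m \<le> \<lfloor>q\<rfloor>" "\<lfloor>q\<rfloor> < 2^(m+1)"
    using \<open>2 \<le> \<lfloor>q\<rfloor>\<close> by (simp_all add: le_nat_iff nat_less_iff)
  then have m: "2^m \<le> q \<and> q < 2^(m+1)" by (simp_all add: le_floor_iff floor_less_iff)
  have "ln_exponent q = m"
    unfolding ln_exponent_def
  proof (rule the_equality)
    fix m' assume "2^m' \<le> q \<and> q < (2::rat)^(m'+1)"
    with m have "(2::rat)^m < 2^(m'+1)" "(2::rat)^m' < 2^(m+1)" by linarith+
    then show "m' = m" by (simp only: power_strict_increasing_iff)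
  qed (rule m)
  with m show ?thesis by simp
qed

lemma ln_ge1_bounds:
  assumes "1 \<le> q"
  shows "real_of_rat (lb_ln_ge1 q n) \<le> ln (of_rat q) \<and> ln (of_rat q) \<le> real_of_rat (ub_ln_ge1 q n)"
proof (cases "q \<le> 2")
  case True
  then show ?thesis
    using ln_base_bounds[OF assms True, of n] by (simp add: lb_ln_ge1_def ub_ln_ge1_def)
next
  case False
  define m where "m = ln_exponent q"
  define y where "y = q / 2^m"
  have "2^m \<le> q" "q < 2^(m+1)" using ln_exponent_bounds[of q] False by (auto simp: m_def)
  then have "1 \<le> y" "y \<le> 2" by (simp_all add: y_def le_divide_eq divide_le_eq)
  note y_bounds = ln_base_bounds[OF this, of n]
  note ln2_bounds = ln_base_bounds[of 2 n, simplified]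
  have "ln (of_rat q) = real m * ln 2 + ln (of_rat y)"
    using False by (simp add: y_def of_rat_divide of_rat_power ln_div ln_realpow)
  moreover have "real m * real_of_rat (lb_ln_base 2 n) \<le> real m * ln 2"
    "real m * ln 2 \<le> real m * real_of_rat (ub_ln_base 2 n)"
    using ln2_bounds by (simp_all add: mult_left_mono)
  moreover have
    "real_of_rat (lb_ln_ge1 q n) = real m * real_of_rat (lb_ln_base 2 n) + real_of_rat (lb_ln_base y n)"
    "real_of_rat (ub_ln_ge1 q n) = real m * real_of_rat (ub_ln_base 2 n) + real_of_rat (ub_ln_base y n)"
    using False
    by (simp_all add: lb_ln_ge1_def ub_ln_ge1_def Let_def m_def y_def of_rat_add of_rat_mult)
  ultimately show ?thesis using y_bounds by linarith
qed

lemma ln_bounds: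
  assumes "0 < q"
  shows "real_of_rat (lb_ln q n) \<le> ln (of_rat q) \<and> ln (of_rat q) \<le> real_of_rat (ub_ln q n)"
proof (cases "q < 1")
  case True
  have "ln (real_of_rat (1/q)) = - ln (real_of_rat q)"
    using assms by (simp add: of_rat_divide ln_div)
  then show ?thesis
    using ln_ge1_bounds[of "1/q" n] True assms by (simp add: lb_ln_def ub_ln_def of_rat_minus)
next
  case False
  then show ?thesis using ln_ge1_bounds[of q n] by (simp add: lb_ln_def ub_ln_def)
qed

lemma mem_interval_set_mono:
  fixes f :: "real \<Rightarrow> real"
  assumes "x \<in> interval_set (a, b)"
    and mono: "\<And>y z. real_of_rat a \<le> y \<Longrightarrow> y \<le> z \<Longrightarrow> f y \<le> f z"
    and "real_of_rat l \<le> f (of_rat a)" "f (of_rat b) \<le> real_of_rat u"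
  shows "f x \<in> interval_set (l, u)"
proof -
  have "f (of_rat a) \<le> f x" "f x \<le> f (of_rat b)"
    using assms(1) by (auto simp: interval_set_def intro: mono)
  with assms(3,4) show ?thesis by (simp add: interval_set_def)
qed

theorem proposition12:
  fixes n :: nat and X :: "rat \<times> rat" and x :: real
  assumes "x \<in> interval_set X"
  shows "arctan x \<in> interval_set (atan_interval X n)
       \<and> exp x \<in> interval_set (exp_interval X n)
       \<and> (fst X \<ge> 0 \<longrightarrow> sqrt x \<in> interval_set (sqrt_interval X n))
       \<and> (fst X > 0 \<longrightarrow> ln x \<in> interval_set (ln_interval X n))
       \<and> pi \<in> interval_set (pi_interval n)"
proof -
  obtain a b where X: "X = (a, b)" by (cases X)
  with assms have x: "x \<in> interval_set (a, b)" by simp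
  then have "real_of_rat a \<le> real_of_rat b" by (simp add: interval_set_def)
  then have "a \<le> b" by (simp only: of_rat_less_eq)
  have "arctan x \<in> interval_set (atan_interval X n)"
    using x atan_bounds[of a n] atan_bounds[of b n]
    by (simp add: atan_interval_def X mem_interval_set_mono arctan_le_iff)
  moreover have "exp x \<in> interval_set (exp_interval X n)"
    using x exp_bounds[of a n] exp_bounds[of b n]
    by (simp add: exp_interval_def X mem_interval_set_mono)
  moreover have "sqrt x \<in> interval_set (sqrt_interval X n)" if "0 \<le> a"
    using x lb_sqrt_le_sqrt[OF that] sqrt_le_ub_sqrt[of b] that \<open>a \<le> b\<close>
    by (simp add: sqrt_interval_def X mem_interval_set_mono)
  moreover have "ln x \<in> interval_set (lb_ln a n, ub_ln b n)" if "0 < a"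
  proof (rule mem_interval_set_mono[OF x])
    have "0 < real_of_rat a" "0 < b" using that \<open>a \<le> b\<close> by auto
    show "ln y \<le> ln z" if "real_of_rat a \<le> y" "y \<le> z" for y z
      using that \<open>0 < real_of_rat a\<close> by (intro ln_mono) linarith+
    show "real_of_rat (lb_ln a n) \<le> ln (of_rat a)" "ln (of_rat b) \<le> real_of_rat (ub_ln b n)"
      using ln_bounds[OF that] ln_bounds[OF \<open>0 < b\<close>] by blast+
  qed
  moreover have "pi \<in> interval_set (pi_interval n)"
    using pi_bounds[of n] by (simp add: interval_set_def pi_interval_def)
  ultimately show ?thesis unfolding X ln_interval_def fst_conv snd_conv by blast
qed

end
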